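(* For $s\in\mu_r$, $v\in\mathcal{A}_1$, $w\in\mathcal{A}_r$: \[ vz\diamond_s w=v\diamond_s wz=(v\diamond_s w)z . \]
   Context: Fix $r\ge1$, $\mu_r$ the $r$th roots of unity, $\mathcal{A}_r=\mathbb{Q}\langle x,y_s\mid s\in\mu_r\rangle$ the free noncommutative polynomial algebra over $\mathbb{Q}$, $\mathcal{A}_1=\mathbb{Q}\langle x,y\rangle$ with $y=y_1$. Write $z=x+y_1$, $z_s=x+y_s$, $\delta(1)=0$, $\delta(s)=1$ ($s\ne1$), $z_s^\delta=x+\delta(s)y_s$, $z_{k,s}=x^{k-1}y_s$. Let $\varphi$ be the algebra automorphism of $\mathcal{A}_r$ with $\varphi(x)=z$, $\varphi(y_s)=\delta(s)y_s-y_1$. Every word is uniquely $z_{k_1,s_1}\cdots z_{k_l,s_l}x^a$ ($l,a\ge0$); define linear maps $\mathcal{I}(z_{k_1,s_1}\cdots z_{k_l,s_l}x^a)=z_{k_1,s_1}z_{k_2,s_1s_2}\cdots z_{k_l,s_1\cdots s_l}x^a$ and $M_s(z_{k_1,s_1}\cdots z_{k_l,s_l}x^a)=z_{k_1,ss_1}z_{k_2,s_2}\cdots z_{k_l,s_l}x^a$ (with $M_s(x^a)=x^a$), and $\psi_s=\varphi\circ\mathcal{I}\circ M_s$. Diamond product: for $s\in\mu_r$, $\diamond_s:\mathcal{A}_1\times\mathcal{A}_r\to\mathcal{A}_r$ is the $\mathbb{Q}$-bilinear map defined recursively on words by $1\diamond_s w=w$, $v\diamond_s1=\psi_s\varphi(v)$,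 and for $v\in\mathcal{A}_1$, $w\in\mathcal{A}_r$, $1\ne t\in\mu_r$: $vx\diamond_s wx=(v\diamond_s wx)x-(vy\diamond_s w)x$; $vy\diamond_s wx=(v\diamond_s wx)y+(vy\diamond_s w)x$; $vx\diamond_s wy=(v\diamond_s wy)x+(vx\diamond_s w)y$; $vy\diamond_s wy=(v\diamond_s wy)y-(vx\diamond_s w)y$; $vx\diamond_s wy_t=(v\diamond_s wy_t)x+(v\diamond_s wz_t)y_t-(vy\diamond_s w)y_t$; $vy\diamond_s wy_t=(v\diamond_s wy_t)y-(v\diamond_s wz_t)y_t+(vy\diamond_s w)y_t$. *)

theory Defs
  imports Complex_Main "HOL-Library.Poly_Mapping"
begin

text \<open>Letters of the free algebra: x and y_s, where s is a complex number;
  elements of mu_r are the complex s with s^r = 1 (and 1 is the root s = 1).\<close>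
datatype letter = X | Y complex

type_synonym word = "letter list"
type_synonym ncpoly = "word \<Rightarrow>\<^sub>0 rat"

definition wmon :: "word \<Rightarrow> ncpoly" where
  "wmon w = Poly_Mapping.single w 1"

definition pscale :: "rat \<Rightarrow> ncpoly \<Rightarrow> ncpoly" where
  "pscale c p = Poly_Mapping.map (\<lambda>a. c * a) p"

definition lin :: "(word \<Rightarrow> ncpoly) \<Rightarrow> ncpoly \<Rightarrow> ncpoly" where
  "lin f p = (\<Sum>u\<in>Poly_Mapping.keys p. pscale (Poly_Mapping.lookup p u) (f u))"

definition pmul :: "ncpoly \<Rightarrow> ncpoly \<Rightarrow> ncpoly" where
  "pmul p q = lin (\<lambda>u. lin (\<lambda>v. wmon (u @ v)) q) p"

definition inA1 :: "ncpoly \<Rightarrow> bool" where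
  "inA1 p \<longleftrightarrow> (\<forall>u\<in>Poly_Mapping.keys p. set u \<subseteq> {X, Y 1})"

definition inAr :: "nat \<Rightarrow> ncpoly \<Rightarrow> bool" where
  "inAr r p \<longleftrightarrow> (\<forall>u\<in>Poly_Mapping.keys p. \<forall>c. Y c \<in> set u \<longrightarrow> c ^ r = 1)"

definition zp :: ncpoly where
  "zp = wmon [X] + wmon [Y 1]"

definition delta :: "complex \<Rightarrow> rat" where
  "delta s = (if s = 1 then 0 else 1)"

fun phi_letter :: "letter \<Rightarrow> ncpoly" where
  "phi_letter X = wmon [X] + wmon [Y 1]"
| "phi_letter (Y s) = pscale (delta s) (wmon [Y s]) - wmon [Y 1]"

fun phi_word :: "word \<Rightarrow> ncpoly" where
  "phi_word [] = wmon []"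
| "phi_word (a # w) = pmul (phi_letter a) (phi_word w)"

definition phiL :: "ncpoly \<Rightarrow> ncpoly" where
  "phiL = lin phi_word"

fun Iw :: "complex \<Rightarrow> word \<Rightarrow> word" where
  "Iw t [] = []"
| "Iw t (X # w) = X # Iw t w"
| "Iw t (Y u # w) = Y (t * u) # Iw (t * u) w"

fun Mw :: "complex \<Rightarrow> word \<Rightarrow> word" where
  "Mw s [] = []"
| "Mw s (X # w) = X # Mw s w"
| "Mw s (Y t # w) = Y (s * t) # w"

definition psiL :: "complex \<Rightarrow> ncpoly \<Rightarrow> ncpoly" where
  "psiL s = lin (\<lambda>w. phi_word (Iw 1 (Mw s w)))"

definition rmul :: "ncpoly \<Rightarrow> letter \<Rightarrow> ncpoly" where
  "rmul p a = lin (\<lambda>u. wmon (u @ [a])) p"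

text \<open>Diamond product on words, stored reversed (head = last letter).
  Words v containing letters other than x, y_1 are outside A_1 and get the junk value 0.\<close>
function dr :: "complex \<Rightarrow> word \<Rightarrow> word \<Rightarrow> ncpoly" where
  "dr s [] rw = wmon (rev rw)"
| "dr s (a # rv) [] = psiL s (phiL (wmon (rev (a # rv))))"
| "dr s (a # rv) (b # rw) =
    (case a of
       X \<Rightarrow> (case b of
              X \<Rightarrow> rmul (dr s rv (X # rw)) X - rmul (dr s (Y 1 # rv) rw) X
            | Y t \<Rightarrow> (if t = 1 then
                        rmul (dr s rv (Y 1 # rw)) X + rmul (dr s (X # rv) rw) (Y 1)
                      else
                        rmul (dr s rv (Y t # rw)) X
                        + rmul (dr s rv (X # rw) + dr s rv (Y t # rw)) (Y t)
                        - rmul (dr s (Y 1 # rv) rw) (Y t)))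
     | Y u \<Rightarrow> (if u = 1 then
                (case b of
                   X \<Rightarrow> rmul (dr s rv (X # rw)) (Y 1) + rmul (dr s (Y 1 # rv) rw) X
                 | Y t \<Rightarrow> (if t = 1 then
                             rmul (dr s rv (Y 1 # rw)) (Y 1) - rmul (dr s (X # rv) rw) (Y 1)
                           else
                             rmul (dr s rv (Y t # rw)) (Y 1)
                             - rmul (dr s rv (X # rw) + dr s rv (Y t # rw)) (Y t)
                             + rmul (dr s (Y 1 # rv) rw) (Y t)))
              else 0))"
  by pat_completeness auto
termination
  by (relation "measure (\<lambda>(s, rv, rw). length rv + length rw)") auto

definition diamond :: "complex \<Rightarrow> ncpoly \<Rightarrow> ncpoly \<Rightarrow> ncpoly" where
  "diamond s v w = lin (\<lambda>a. lin (\<lambda>b. dr s (rev a) (rev b)) w) v"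

end

theory Submission
  imports Defs
begin

text \<open>Both identities reduce, by bilinearity, to words. For the left factor, adding the
  defining recursions for \<open>vx \<diamond>\<^sub>s w\<close> and \<open>vy \<diamond>\<^sub>s w\<close> makes all correction terms
  cancel and leaves \<open>(v \<diamond>\<^sub>s w) z\<close>; at the base \<open>w = 1\<close> this is \<open>\<phi>(vz) = \<phi>(v) x\<close>
  together with \<open>\<psi>\<^sub>s(u x) = \<psi>\<^sub>s(u) z\<close>. For the right factor one inducts on \<open>v \<in> \<A>\<^sub>1\<close>:
  for \<open>v = v'a\<close>, adding the recursions for \<open>v'a \<diamond>\<^sub>s wx\<close> and \<open>v'a \<diamond>\<^sub>s wy\<close> leaves terms
  \<open>v' \<diamond>\<^sub>s wz\<close>, handled by the induction hypothesis, and \<open>v'z \<diamond>\<^sub>s w\<close>, handled by the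
  left identity.\<close>

lemma lookup_pscale [simp]:
  "Poly_Mapping.lookup (pscale c p) u = c * Poly_Mapping.lookup p u"
  unfolding pscale_def by (simp add: Poly_Mapping.map.rep_eq when_def)

lemma pscale_0_left [simp]: "pscale 0 p = 0"
  by (rule poly_mapping_eqI) simp

lemma pscale_0_right [simp]: "pscale c 0 = 0"
  by (rule poly_mapping_eqI) simp

lemma pscale_1 [simp]: "pscale 1 p = p"
  by (rule poly_mapping_eqI) simp

lemma pscale_add_left: "pscale (a + b) p = pscale a p + pscale b p"
  by (rule poly_mapping_eqI) (simp add: lookup_add algebra_simps)

lemma pscale_add_right: "pscale c (p + q) = pscale c p + pscale c q"
  by (rule poly_mapping_eqI) (simp add: lookup_add algebra_simps)

lemma pscale_pscale: "pscale c (pscale a p) = pscale (c * a) p"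
  by (rule poly_mapping_eqI) simp

lemma pscale_sum: "pscale c (sum f S) = (\<Sum>i\<in>S. pscale c (f i))"
  by (induction S rule: infinite_finite_induct) (auto simp: pscale_add_right)

lemma keys_pscale_subset: "Poly_Mapping.keys (pscale c p) \<subseteq> Poly_Mapping.keys p"
  by (auto simp: in_keys_iff)

lemma lin_superset:
  assumes "finite S" "Poly_Mapping.keys p \<subseteq> S"
  shows "lin f p = (\<Sum>u\<in>S. pscale (Poly_Mapping.lookup p u) (f u))"
  unfolding lin_def
  by (rule sum.mono_neutral_left) (use assms in \<open>auto simp: in_keys_iff\<close>)

lemma lin_0 [simp]: "lin f 0 = 0"
  by (simp add: lin_def)

lemma lin_wmon [simp]: "lin f (wmon u) = f u"
  by (simp add: lin_def wmon_def)

lemma lin_add: "lin f (p + q) = lin f p + lin f q"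
proof -
  let ?S = "Poly_Mapping.keys p \<union> Poly_Mapping.keys q"
  have "lin f (p + q) = (\<Sum>u\<in>?S. pscale (Poly_Mapping.lookup (p + q) u) (f u))"
    using keys_add[of p q] by (intro lin_superset) auto
  also have "\<dots> = (\<Sum>u\<in>?S. pscale (Poly_Mapping.lookup p u) (f u))
                 + (\<Sum>u\<in>?S. pscale (Poly_Mapping.lookup q u) (f u))"
    by (simp add: lookup_add pscale_add_left sum.distrib)
  also have "\<dots> = lin f p + lin f q"
    by (subst (1 2) lin_superset[where S = ?S]) auto
  finally show ?thesis .
qed

lemma lin_diff: "lin f (p - q) = lin f p - lin f q"
  by (metis lin_add eq_diff_eq)

lemma lin_pscale: "lin f (pscale c p) = pscale c (lin f p)"
proof -
  have "lin f (pscale c p)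
      = (\<Sum>u\<in>Poly_Mapping.keys p. pscale (Poly_Mapping.lookup (pscale c p) u) (f u))"
    by (rule lin_superset) (auto simp: keys_pscale_subset)
  then show ?thesis by (simp add: lin_def pscale_sum pscale_pscale)
qed

lemma lin_sum: "lin f (sum g S) = (\<Sum>i\<in>S. lin f (g i))"
  by (induction S rule: infinite_finite_induct) (auto simp: lin_add)

lemma lin_lin: "lin f (lin g p) = lin (\<lambda>u. lin f (g u)) p"
  by (simp add: lin_def[of g] lin_sum lin_pscale) (simp add: lin_def)

lemma lin_fun_add: "lin (\<lambda>u. f u + g u) p = lin f p + lin g p"
  by (simp add: lin_def pscale_add_right sum.distrib)

lemma lin_wmon_id [simp]: "lin wmon p = p"
proof (rule poly_mapping_eqI)
  fix k
  have "(\<Sum>u\<in>Poly_Mapping.keys p. Poly_Mapping.lookup p u * Poly_Mapping.lookup (wmon u) k)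
      = (\<Sum>u\<in>Poly_Mapping.keys p. if u = k then Poly_Mapping.lookup p u else 0)"
    by (rule sum.cong) (auto simp: wmon_def lookup_single when_def)
  then show "Poly_Mapping.lookup (lin wmon p) k = Poly_Mapping.lookup p k"
    by (simp add: lin_def lookup_sum in_keys_iff)
qed

lemma lin_cong: "(\<And>u. u \<in> Poly_Mapping.keys p \<Longrightarrow> f u = g u) \<Longrightarrow> lin f p = lin g p"
  by (simp add: lin_def)

definition rmul_z :: "ncpoly \<Rightarrow> ncpoly" where
  "rmul_z p = rmul p X + rmul p (Y 1)"

lemma rmul_z_eq_lin: "rmul_z p = lin (\<lambda>u. wmon (u @ [X]) + wmon (u @ [Y 1])) p"
  by (simp add: rmul_z_def rmul_def lin_fun_add)

lemma rmul_add: "rmul (p + q) a = rmul p a + rmul q a"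
  by (simp add: rmul_def lin_add)

lemma rmul_diff: "rmul (p - q) a = rmul p a - rmul q a"
  by (simp add: rmul_def lin_diff)

lemma rmul_wmon: "rmul (wmon u) a = wmon (u @ [a])"
  by (simp add: rmul_def)

lemma rmul_z_lin: "rmul_z (lin h p) = lin (\<lambda>u. rmul_z (h u)) p"
  by (simp add: rmul_z_eq_lin lin_lin)

lemma pmul_zp: "pmul p zp = rmul_z p"
  by (simp add: pmul_def zp_def rmul_z_eq_lin lin_add)

lemma pmul_add_right: "pmul p (q1 + q2) = pmul p q1 + pmul p q2"
  by (simp add: pmul_def lin_add lin_fun_add)

lemma pmul_rmul: "pmul p (rmul q a) = rmul (pmul p q) a"
  by (simp add: pmul_def rmul_def lin_lin)

lemma pmul_rmul_z: "pmul p (rmul_z q) = rmul_z (pmul p q)"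
  by (simp add: rmul_z_def pmul_add_right pmul_rmul)

lemma pmul_wmon_Nil: "pmul p (wmon []) = p"
  by (simp add: pmul_def)

lemma phi_word_snoc_z: "phi_word (u @ [X]) + phi_word (u @ [Y 1]) = rmul (phi_word u) X"
  by (induction u) (simp_all add: pmul_wmon_Nil delta_def rmul_wmon pmul_add_right[symmetric] pmul_rmul)

lemma phi_word_snoc_X: "phi_word (u @ [X]) = rmul_z (phi_word u)"
proof (induction u)
  case Nil
  then show ?case by (simp add: pmul_wmon_Nil rmul_z_def rmul_wmon)
next
  case (Cons a u)
  then show ?case by (simp add: pmul_rmul_z)
qed

lemma Mw_snoc_X: "Mw s (u @ [X]) = Mw s u @ [X]"
  by (induction s u rule: Mw.induct) auto

lemma Iw_snoc_X: "Iw t (u @ [X]) = Iw t u @ [X]"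
  by (induction t u rule: Iw.induct) auto

lemma psiL_add: "psiL s (p + q) = psiL s p + psiL s q"
  by (simp add: psiL_def lin_add)

lemma psiL_wmon_Nil: "psiL s (wmon []) = wmon []"
  by (simp add: psiL_def)

lemma psiL_rmul_X: "psiL s (rmul p X) = rmul_z (psiL s p)"
  by (simp add: psiL_def rmul_def lin_lin rmul_z_lin Mw_snoc_X Iw_snoc_X phi_word_snoc_X)

lemma dr_snoc_z_left: "dr s (X # rv) rw + dr s (Y 1 # rv) rw = rmul_z (dr s rv rw)"
proof (cases rw)
  case Nil
  have "dr s (X # rv) rw + dr s (Y 1 # rv) rw = psiL s (rmul (phi_word (rev rv)) X)"
    using Nil by (simp add: phiL_def psiL_add[symmetric] phi_word_snoc_z)
  also have "\<dots> = rmul_z (dr s rv rw)"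
    using Nil by (cases rv) (simp_all add: psiL_rmul_X phiL_def psiL_wmon_Nil)
  finally show ?thesis .
next
  case (Cons b rw')
  then show ?thesis
    by (cases b) (auto simp: rmul_z_def rmul_add rmul_diff algebra_simps)
qed

lemma dr_snoc_z_right:
  assumes "set rv \<subseteq> {X, Y 1}"
  shows "dr s rv (X # rw) + dr s rv (Y 1 # rw) = rmul_z (dr s rv rw)"
  using assms
proof (induction rv arbitrary: rw)
  case Nil
  then show ?case by (simp add: rmul_z_def rmul_wmon)
next
  case (Cons a rv)
  have "dr s rv (X # rw) + dr s rv (Y 1 # rw) = dr s (X # rv) rw + dr s (Y 1 # rv) rw"
    using Cons by (simp add: dr_snoc_z_left)
  then have dr_Y1: "dr s rv (Y 1 # rw) = dr s (X # rv) rw + dr s (Y 1 # rv) rw - dr s rv (X # rw)"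
    by (simp add: algebra_simps)
  from Cons.prems consider "a = X" | "a = Y 1" by auto
  then show ?case
    by cases (simp_all add: dr_Y1 rmul_z_def rmul_add rmul_diff algebra_simps)
qed

lemma rmul_z_diamond:
  "rmul_z (diamond s v w) = lin (\<lambda>a. lin (\<lambda>b. rmul_z (dr s (rev a) (rev b))) w) v"
  by (simp add: diamond_def rmul_z_lin)

lemma diamond_rmul_z_left: "diamond s (rmul_z v) w = rmul_z (diamond s v w)"
  unfolding rmul_z_diamond
  by (simp add: diamond_def rmul_z_eq_lin lin_lin lin_add lin_fun_add[symmetric] dr_snoc_z_left)

lemma diamond_rmul_z_right:
  assumes "inA1 v"
  shows "diamond s v (rmul_z w) = rmul_z (diamond s v w)"
proof -
  have "set (rev a) \<subseteq> {X, Y 1}" if "a \<in> Poly_Mapping.keys v" for a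
    using assms that by (auto simp: inA1_def)
  then show ?thesis
    unfolding rmul_z_diamond unfolding diamond_def rmul_z_eq_lin[of w] lin_lin
    by (intro lin_cong) (simp add: lin_add dr_snoc_z_right)
qed

theorem mainTheorem7:
  fixes r :: nat and s :: complex and v w :: ncpoly
  assumes "r \<ge> 1" and "s ^ r = 1" and "inA1 v" and "inAr r w"
  shows "diamond s (pmul v zp) w = diamond s v (pmul w zp)
       \<and> diamond s v (pmul w zp) = pmul (diamond s v w) zp"
  using diamond_rmul_z_left[of s v w] diamond_rmul_z_right[OF \<open>inA1 v\<close>, of s w]
  by (simp add: pmul_zp)

end
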